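(* Let $A, C, D$ be binary random variables, with $A$ taking values $a,\overline{a}$, $C$ taking values $c,\overline{c}$, $D$ taking values $d,\overline{d}$, and let $Y$ be a real random variable with finite expectation. Suppose the joint distribution factorizes as \[ p(A,C,D,Y)=p(C)\,p(D\mid C)\,p(A\mid C)\,p(Y\mid A,C), \] and that every event $\{A=x, C=y, D=z\}$ has positive probability. Let $p(c)=0.5$ and $p(a\mid c)=p(\overline{a}\mid\overline{c})=p(d\mid c)=p(\overline{d}\mid\overline{c})\ge 0.5$. If \[ E[Y|a,c]-E[Y|a,\overline{c}]\ \ge\ E[Y|\overline{a},\overline{c}]-E[Y|\overline{a},c]\ \ge\ 0, \] then $RD_{crude}\ge RD_{obs}\ge RD_{true}$.
   Context: $RD_{true}=E[Y|a,c]p(c)+E[Y|a,\overline{c}]p(\overline{c})-E[Y|\overline{a},c]p(c)-E[Y|\overline{a},\overline{c}]p(\overline{c})$; $RD_{crude}=E[Y|a]-E[Y|\overline{a}]$; $RD_{obs}=E[Y|a,d]p(d)+E[Y|a,\overline{d}]p(\overline{d})-E[Y|\overline{a},d]p(d)-E[Y|\overline{a},\overline{d}]p(\overline{d})$. *)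

theory Defs
  imports "HOL-Probability.Probability"
begin

text \<open>Binary random variables are modelled as functions into bool; the value True
  stands for a (resp. c, d) and False for the barred value.\<close>

definition ev :: "'w measure \<Rightarrow> ('w \<Rightarrow> 'b) \<Rightarrow> 'b \<Rightarrow> 'w set" where
  "ev M X x = {w \<in> space M. X w = x}"

definition cprob :: "'w measure \<Rightarrow> 'w set \<Rightarrow> 'w set \<Rightarrow> real" where
  "cprob M E F = measure M (E \<inter> F) / measure M F"

definition cexp :: "'w measure \<Rightarrow> ('w \<Rightarrow> real) \<Rightarrow> 'w set \<Rightarrow> real" where
  "cexp M Y F = (\<integral>w. indicator F w * Y w \<partial>M) / measure M F"

definition RD_true :: "'w measure \<Rightarrow> ('w \<Rightarrow> bool) \<Rightarrow> ('w \<Rightarrow> bool) \<Rightarrow> ('w \<Rightarrow> real) \<Rightarrow> real" where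
  "RD_true M A C Y =
     cexp M Y (ev M A True \<inter> ev M C True) * measure M (ev M C True)
   + cexp M Y (ev M A True \<inter> ev M C False) * measure M (ev M C False)
   - cexp M Y (ev M A False \<inter> ev M C True) * measure M (ev M C True)
   - cexp M Y (ev M A False \<inter> ev M C False) * measure M (ev M C False)"

definition RD_crude :: "'w measure \<Rightarrow> ('w \<Rightarrow> bool) \<Rightarrow> ('w \<Rightarrow> real) \<Rightarrow> real" where
  "RD_crude M A Y = cexp M Y (ev M A True) - cexp M Y (ev M A False)"

definition RD_obs :: "'w measure \<Rightarrow> ('w \<Rightarrow> bool) \<Rightarrow> ('w \<Rightarrow> bool) \<Rightarrow> ('w \<Rightarrow> real) \<Rightarrow> real" where
  "RD_obs M A D Y =
     cexp M Y (ev M A True \<inter> ev M D True) * measure M (ev M D True)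
   + cexp M Y (ev M A True \<inter> ev M D False) * measure M (ev M D False)
   - cexp M Y (ev M A False \<inter> ev M D True) * measure M (ev M D True)
   - cexp M Y (ev M A False \<inter> ev M D False) * measure M (ev M D False)"

end

theory Submission
  imports Defs
begin

(* The factorisation makes the law of Y given A, C, D independent of D, so
   E[Y | A, C, D] = E[Y | A, C], and all three risk differences are weighted averages of the
   four stratum means m_xy = E[Y | A = x, C = y].  With q = p(a | c), s = q^2 + (1 - q)^2 and
   Delta = (m_11 - m_10) - (m_00 - m_01), the symmetric design gives
     RD_crude - RD_obs = (2q - 1)^3 Delta / 4s   and   RD_obs - RD_true = (2q - 1) Delta / 4s,
   both non-negative for q >= 1/2 and Delta >= 0. *)

lemma ev_in_sets:
  assumes "X \<in> measurable M (count_space UNIV)"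
  shows "ev M X b \<in> sets M"
proof -
  have "ev M X b = X -` {b} \<inter> space M" unfolding ev_def by auto
  then show ?thesis using measurable_sets[OF assms, of "{b}"] by simp
qed

lemma (in finite_measure) measure_split_ev:
  assumes X: "X \<in> measurable M (count_space UNIV)" and S: "S \<in> sets M"
  shows "measure M S = measure M (S \<inter> ev M X True) + measure M (S \<inter> ev M X False)"
proof -
  have "S = (S \<inter> ev M X True) \<union> (S \<inter> ev M X False)"
    using sets.sets_into_space[OF S] unfolding ev_def by auto
  moreover have "(S \<inter> ev M X True) \<inter> (S \<inter> ev M X False) = {}" unfolding ev_def by auto
  ultimately show ?thesis
    using finite_measure_Union[of "S \<inter> ev M X True" "S \<inter> ev M X False"] S ev_in_sets[OF X]
    by (metis sets.Int)
qed

lemma integral_indicator_split_ev: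
  fixes Y :: "'w \<Rightarrow> real"
  assumes X: "X \<in> measurable M (count_space UNIV)" and S: "S \<in> sets M"
    and Y: "integrable M Y"
  shows "(\<integral>w. indicator S w * Y w \<partial>M) = (\<integral>w. indicator (S \<inter> ev M X True) w * Y w \<partial>M)
     + (\<integral>w. indicator (S \<inter> ev M X False) w * Y w \<partial>M)"
proof -
  have "integrable M (\<lambda>w. indicator (S \<inter> ev M X b) w * Y w)" for b
    using integrable_real_mult_indicator[OF _ Y, of "S \<inter> ev M X b"] S ev_in_sets[OF X]
    by (simp add: mult.commute)
  moreover have "(\<integral>w. indicator S w * Y w \<partial>M) = (\<integral>w. indicator (S \<inter> ev M X True) w * Y w
      + indicator (S \<inter> ev M X False) w * Y w \<partial>M)"
    by (rule Bochner_Integration.integral_cong) (auto simp: ev_def indicator_def)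
  ultimately show ?thesis by simp
qed

lemma (in finite_measure) integral_indicator_eq_cexp:
  fixes Y :: "'a \<Rightarrow> real"
  assumes "S \<in> sets M"
  shows "(\<integral>w. indicator S w * Y w \<partial>M) = cexp M Y S * measure M S"
proof (cases "measure M S = 0")
  case True
  then have "S \<in> null_sets M" using assms by (simp add: emeasure_eq_measure null_sets_def)
  then have "AE w in M. indicator S w * Y w = 0"
    by (rule AE_I') (auto simp: indicator_def)
  then show ?thesis using True by (simp add: integral_eq_zero_AE)
qed (simp add: cexp_def)

lemma (in finite_measure) cexp_split_ev:
  fixes Y :: "'a \<Rightarrow> real"
  assumes "X \<in> measurable M (count_space UNIV)" and "S \<in> sets M" and "integrable M Y"
  shows "cexp M Y S * measure M S
       = cexp M Y (S \<inter> ev M X True) * measure M (S \<inter> ev M X True)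
       + cexp M Y (S \<inter> ev M X False) * measure M (S \<inter> ev M X False)"
  using integral_indicator_split_ev[OF assms] assms(2) ev_in_sets[OF assms(1)]
  by (simp add: integral_indicator_eq_cexp)

lemma (in finite_measure) integral_indicator_eq_scaled:
  fixes Y :: "'a \<Rightarrow> real"
  assumes S: "S \<in> sets M" and T: "T \<in> sets M"
    and Y[measurable]: "Y \<in> borel_measurable M" and r: "r \<ge> 0"
    and law: "\<And>B. B \<in> sets borel \<Longrightarrow>
       measure M ({w \<in> space M. Y w \<in> B} \<inter> S) = r * measure M ({w \<in> space M. Y w \<in> B} \<inter> T)"
  shows "(\<integral>w. indicator S w * Y w \<partial>M) = r * (\<integral>w. indicator T w * Y w \<partial>M)"
proof -
  define law_on where "law_on U = distr (density M (indicator U)) borel Y" for U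
  have integral_law_on: "(\<integral>w. indicator U w * Y w \<partial>M) = (\<integral>y. y \<partial>law_on U)"
    if "U \<in> sets M" for U
  proof -
    have "density M (indicator U) = density M (\<lambda>w. ennreal (indicator U w :: real))"
      by (simp add: ennreal_indicator)
    then show ?thesis unfolding law_on_def using that
      by (subst integral_distr) (auto simp: integral_density)
  qed
  have emeasure_law_on: "emeasure (law_on U) B = ennreal (measure M ({w \<in> space M. Y w \<in> B} \<inter> U))"
    if "U \<in> sets M" "B \<in> sets borel" for U B
  proof -
    have "{w \<in> space M. Y w \<in> B} \<in> sets M" using that(2) by measurable
    then show ?thesis unfolding law_on_def using that
      by (simp add: emeasure_distr emeasure_restricted emeasure_eq_measure vimage_def Int_def
          conj_commute)
  qed
  have "law_on S = density (law_on T) (\<lambda>_. ennreal r)"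
  proof (rule measure_eqI)
    fix B assume "B \<in> sets (law_on S)"
    then have B: "B \<in> sets borel" by (simp add: law_on_def)
    have "emeasure (law_on S) B = ennreal r * emeasure (law_on T) B"
      using S T r B by (simp add: emeasure_law_on law ennreal_mult)
    then show "emeasure (law_on S) B = emeasure (density (law_on T) (\<lambda>_. ennreal r)) B"
      using B by (simp add: emeasure_density_const law_on_def)
  qed (simp add: law_on_def)
  then have "(\<integral>y. y \<partial>law_on S) = (\<integral>y. r * y \<partial>law_on T)"
    using r by (simp add: integral_density law_on_def)
  then show ?thesis using S T by (simp add: integral_law_on)
qed

lemma (in finite_measure) cexp_eq_if_cprob_eq:
  fixes Y :: "'a \<Rightarrow> real"
  assumes S: "S \<in> sets M" and T: "T \<in> sets M" and "Y \<in> borel_measurable M"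
    and S_pos: "measure M S > 0" and T_pos: "measure M T > 0"
    and law: "\<And>B. B \<in> sets borel \<Longrightarrow>
       cprob M {w \<in> space M. Y w \<in> B} S = cprob M {w \<in> space M. Y w \<in> B} T"
  shows "cexp M Y S = cexp M Y T"
proof -
  have "(\<integral>w. indicator S w * Y w \<partial>M) = measure M S / measure M T * (\<integral>w. indicator T w * Y w \<partial>M)"
  proof (rule integral_indicator_eq_scaled[OF S T assms(3)])
    fix B :: "real set" assume "B \<in> sets borel"
    then show "measure M ({w \<in> space M. Y w \<in> B} \<inter> S)
        = measure M S / measure M T * measure M ({w \<in> space M. Y w \<in> B} \<inter> T)"
      using law S_pos T_pos by (simp add: cprob_def field_simps)
  qed (use S_pos T_pos in simp)
  then show ?thesis using S_pos by (simp add: cexp_def)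
qed

lemma (in finite_measure) cprob_ev_False:
  assumes "X \<in> measurable M (count_space UNIV)" and "F \<in> sets M" and "measure M F > 0"
  shows "cprob M (ev M X False) F = 1 - cprob M (ev M X True) F"
  using measure_split_ev[OF assms(1,2)] assms(3)
  by (simp add: cprob_def Int_commute field_simps)

lemma (in prob_space) measure_ev_False:
  assumes "X \<in> measurable M (count_space UNIV)"
  shows "measure M (ev M X False) = 1 - measure M (ev M X True)"
proof -
  have "space M \<inter> ev M X b = ev M X b" for b unfolding ev_def by auto
  then show ?thesis using measure_split_ev[OF assms sets.top] by (simp add: prob_space)
qed

locale confounder_model = prob_space M
  for M :: "'w measure" and A C D :: "'w \<Rightarrow> bool" and Y :: "'w \<Rightarrow> real" +
  assumes A_measurable: "A \<in> measurable M (count_space UNIV)"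
    and C_measurable: "C \<in> measurable M (count_space UNIV)"
    and D_measurable: "D \<in> measurable M (count_space UNIV)"
    and Y_integrable: "integrable M Y"
    and factorization: "\<And>x y z B. B \<in> sets borel \<Longrightarrow>
          measure M (ev M A x \<inter> ev M C y \<inter> ev M D z \<inter> {w \<in> space M. Y w \<in> B})
        = measure M (ev M C y) * cprob M (ev M D z) (ev M C y) * cprob M (ev M A x) (ev M C y)
          * cprob M {w \<in> space M. Y w \<in> B} (ev M A x \<inter> ev M C y)"
    and measure_cell_pos: "\<And>x y z. measure M (ev M A x \<inter> ev M C y \<inter> ev M D z) > 0"
begin

lemmas A_sets = ev_in_sets[OF A_measurable]
  and C_sets = ev_in_sets[OF C_measurable]
  and D_sets = ev_in_sets[OF D_measurable]

abbreviation stratum_mean :: "bool \<Rightarrow> bool \<Rightarrow> real" where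
  "stratum_mean x y \<equiv> cexp M Y (ev M A x \<inter> ev M C y)"

lemma measure_A_C_pos: "measure M (ev M A x \<inter> ev M C y) > 0"
  using measure_cell_pos[of x y True] finite_measure_mono[of _ "ev M A x \<inter> ev M C y"] A_sets C_sets
  by (metis Int_lower1 less_le_trans sets.Int)

lemma measure_cell:
  "measure M (ev M A x \<inter> ev M C y \<inter> ev M D z)
   = measure M (ev M C y) * cprob M (ev M D z) (ev M C y) * cprob M (ev M A x) (ev M C y)"
proof -
  have "ev M A x \<inter> ev M C y \<inter> ev M D z \<inter> {w \<in> space M. Y w \<in> UNIV} = ev M A x \<inter> ev M C y \<inter> ev M D z"
    and "{w \<in> space M. Y w \<in> UNIV} \<inter> (ev M A x \<inter> ev M C y) = ev M A x \<inter> ev M C y"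
    unfolding ev_def by auto
  then show ?thesis
    using factorization[of UNIV x y z] measure_A_C_pos[of x y] by (simp add: cprob_def)
qed

lemma cexp_cell: "cexp M Y (ev M A x \<inter> ev M C y \<inter> ev M D z) = stratum_mean x y"
proof (rule cexp_eq_if_cprob_eq)
  fix B :: "real set" assume "B \<in> sets borel"
  then have "measure M ({w \<in> space M. Y w \<in> B} \<inter> (ev M A x \<inter> ev M C y \<inter> ev M D z))
      = measure M (ev M A x \<inter> ev M C y \<inter> ev M D z) * cprob M {w \<in> space M. Y w \<in> B} (ev M A x \<inter> ev M C y)"
    using factorization[of B x y z] unfolding measure_cell[symmetric]
    by (simp add: Int_commute[of "{w \<in> space M. Y w \<in> B}"])
  then show "cprob M {w \<in> space M. Y w \<in> B} (ev M A x \<inter> ev M C y \<inter> ev M D z)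
           = cprob M {w \<in> space M. Y w \<in> B} (ev M A x \<inter> ev M C y)"
    using measure_cell_pos[of x y z] by (simp add: cprob_def[of _ _ "ev M A x \<inter> ev M C y \<inter> ev M D z"])
qed (use A_sets C_sets D_sets Y_integrable measure_cell_pos measure_A_C_pos in auto)

lemma measure_A_D:
  "measure M (ev M A x \<inter> ev M D z)
   = measure M (ev M A x \<inter> ev M C True \<inter> ev M D z) + measure M (ev M A x \<inter> ev M C False \<inter> ev M D z)"
  using measure_split_ev[OF C_measurable, of "ev M A x \<inter> ev M D z"] A_sets D_sets
  by (simp add: Int_ac)

lemma cexp_A_D:
  "cexp M Y (ev M A x \<inter> ev M D z)
   = (stratum_mean x True * measure M (ev M A x \<inter> ev M C True \<inter> ev M D z)
      + stratum_mean x False * measure M (ev M A x \<inter> ev M C False \<inter> ev M D z))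
     / (measure M (ev M A x \<inter> ev M C True \<inter> ev M D z)
      + measure M (ev M A x \<inter> ev M C False \<inter> ev M D z))"
proof -
  have "cexp M Y (ev M A x \<inter> ev M D z) * measure M (ev M A x \<inter> ev M D z)
     = stratum_mean x True * measure M (ev M A x \<inter> ev M C True \<inter> ev M D z)
     + stratum_mean x False * measure M (ev M A x \<inter> ev M C False \<inter> ev M D z)"
    using cexp_split_ev[OF C_measurable _ Y_integrable, of "ev M A x \<inter> ev M D z"] A_sets D_sets
      cexp_cell[of x True z] cexp_cell[of x False z]
    by (simp add: Int_ac)
  moreover have "measure M (ev M A x \<inter> ev M D z) > 0"
    using measure_A_D[of x z] measure_cell_pos[of x True z] measure_cell_pos[of x False z] by simp
  ultimately show ?thesis by (simp add: measure_A_D field_simps)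
qed

end

locale symmetric_confounder_model = confounder_model +
  fixes q :: real
  assumes measure_C: "measure M (ev M C y) = 1/2"
    and cprob_A_C: "cprob M (ev M A x) (ev M C y) = (if x = y then q else 1 - q)"
    and cprob_D_C: "cprob M (ev M D z) (ev M C y) = (if z = y then q else 1 - q)"
begin

lemma measure_cell_eq:
  "measure M (ev M A x \<inter> ev M C y \<inter> ev M D z)
   = (if z = y then q else 1 - q) * (if x = y then q else 1 - q) / 2"
  by (simp add: measure_cell measure_C cprob_A_C cprob_D_C)

lemma q_bounds: "0 < q" "q < 1"
proof -
  have "0 < (1 - q) * q"
    using measure_cell_pos[of True True False] by (simp add: measure_cell_eq)
  then show "0 < q" "q < 1" by (auto simp: zero_less_mult_iff)
qed

lemma measure_A_C: "measure M (ev M A x \<inter> ev M C y) = (if x = y then q else 1 - q) / 2"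
  using cprob_A_C[of x y] by (simp add: cprob_def measure_C)

lemma measure_A: "measure M (ev M A x) = 1/2"
  using measure_split_ev[OF C_measurable A_sets, of x] by (simp add: measure_A_C)

lemma measure_D: "measure M (ev M D z) = 1/2"
  using measure_split_ev[OF C_measurable D_sets, of z] cprob_D_C[of z True] cprob_D_C[of z False]
  by (simp add: cprob_def measure_C)

lemma cexp_A: "cexp M Y (ev M A x) = q * stratum_mean x x + (1 - q) * stratum_mean x (\<not> x)"
  using cexp_split_ev[OF C_measurable A_sets Y_integrable, of x]
  by (cases x) (simp_all add: measure_A measure_A_C)

lemma RD_obs_eq:
  "RD_obs M A D Y =
     ((q^2 * stratum_mean True True + (1 - q)^2 * stratum_mean True False)
      - ((1 - q)^2 * stratum_mean False True + q^2 * stratum_mean False False))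
     / (2 * (q^2 + (1 - q)^2))
   + (stratum_mean True True + stratum_mean True False
      - stratum_mean False True - stratum_mean False False) / 4"
proof -
  define s where "s = q^2 + (1 - q)^2"
  have "s > 0" unfolding s_def using q_bounds by (simp add: add_pos_nonneg)
  then have diagonal: "cexp M Y (ev M A x \<inter> ev M D x)
      = ((if x then q^2 else (1 - q)^2) * stratum_mean x True
         + (if x then (1 - q)^2 else q^2) * stratum_mean x False) / s" for x
    unfolding s_def by (cases x) (simp_all add: cexp_A_D measure_cell_eq field_simps power2_eq_square)
  have off_diagonal: "cexp M Y (ev M A x \<inter> ev M D z)
      = (stratum_mean x True + stratum_mean x False) / 2" if "x \<noteq> z" for x z
    using q_bounds that by (cases x) (simp_all add: cexp_A_D measure_cell_eq field_simps)
  show ?thesis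
    using \<open>s > 0\<close> unfolding RD_obs_def measure_D diagonal s_def[symmetric]
    by (simp add: off_diagonal field_simps)
qed

lemma RD_crude_eq:
  "RD_crude M A Y = q * stratum_mean True True + (1 - q) * stratum_mean True False
     - ((1 - q) * stratum_mean False True + q * stratum_mean False False)"
  by (simp add: RD_crude_def cexp_A)

lemma RD_true_eq:
  "RD_true M A C Y = (stratum_mean True True + stratum_mean True False
     - stratum_mean False True - stratum_mean False False) / 2"
  by (simp add: RD_true_def measure_C field_simps)

end

lemma risk_differences_ordered:
  fixes q m11 m10 m01 m00 :: real
  assumes q: "1/2 \<le> q" and modification: "m00 - m01 \<le> m11 - m10"
  defines "obs \<equiv> ((q^2 * m11 + (1 - q)^2 * m10) - ((1 - q)^2 * m01 + q^2 * m00))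
      / (2 * (q^2 + (1 - q)^2)) + (m11 + m10 - m01 - m00) / 4"
  shows "obs \<le> q * m11 + (1 - q) * m10 - ((1 - q) * m01 + q * m00)"
    and "(m11 + m10 - m01 - m00) / 2 \<le> obs"
proof -
  define s where "s = q^2 + (1 - q)^2"
  define \<Delta> where "\<Delta> = (m11 - m10) - (m00 - m01)"
  have "s > 0" unfolding s_def using q by (simp add: add_pos_nonneg)
  have "\<Delta> \<ge> 0" "2 * q - 1 \<ge> 0" using q modification unfolding \<Delta>_def by simp_all
  then have "(2 * q - 1)^3 * \<Delta> / (4 * s) \<ge> 0" "(2 * q - 1) * \<Delta> / (4 * s) \<ge> 0"
    using \<open>s > 0\<close> by simp_all
  moreover have "q * m11 + (1 - q) * m10 - ((1 - q) * m01 + q * m00) - obs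
      = (2 * q - 1)^3 * \<Delta> / (4 * s)"
    and "obs - (m11 + m10 - m01 - m00) / 2 = (2 * q - 1) * \<Delta> / (4 * s)"
    using \<open>s > 0\<close> unfolding obs_def s_def[symmetric] \<Delta>_def
    by (simp_all add: field_simps) (simp_all add: s_def power2_eq_square power3_eq_cube algebra_simps)
  ultimately show "obs \<le> q * m11 + (1 - q) * m10 - ((1 - q) * m01 + q * m00)"
    and "(m11 + m10 - m01 - m00) / 2 \<le> obs"
    by linarith+
qed

theorem theorem2:
  fixes M :: "'w measure"
    and A C D :: "'w \<Rightarrow> bool"
    and Y :: "'w \<Rightarrow> real"
  assumes "prob_space M"
    and "A \<in> measurable M (count_space UNIV)"
    and "C \<in> measurable M (count_space UNIV)"
    and "D \<in> measurable M (count_space UNIV)"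
    and "Y \<in> borel_measurable M"
    and "integrable M Y"
    and factor: "\<And>x y z B. B \<in> sets borel \<Longrightarrow>
          measure M (ev M A x \<inter> ev M C y \<inter> ev M D z \<inter> {w \<in> space M. Y w \<in> B})
        = measure M (ev M C y) * cprob M (ev M D z) (ev M C y) * cprob M (ev M A x) (ev M C y)
          * cprob M {w \<in> space M. Y w \<in> B} (ev M A x \<inter> ev M C y)"
    and pos: "\<And>x y z. measure M (ev M A x \<inter> ev M C y \<inter> ev M D z) > 0"
    and pc: "measure M (ev M C True) = 1/2"
    and eq1: "cprob M (ev M A True) (ev M C True) = cprob M (ev M A False) (ev M C False)"
    and eq2: "cprob M (ev M A False) (ev M C False) = cprob M (ev M D True) (ev M C True)"
    and eq3: "cprob M (ev M D True) (ev M C True) = cprob M (ev M D False) (ev M C False)"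
    and ge: "cprob M (ev M A True) (ev M C True) \<ge> 1/2"
    and h1: "cexp M Y (ev M A True \<inter> ev M C True) - cexp M Y (ev M A True \<inter> ev M C False)
           \<ge> cexp M Y (ev M A False \<inter> ev M C False) - cexp M Y (ev M A False \<inter> ev M C True)"
    and h2: "cexp M Y (ev M A False \<inter> ev M C False) - cexp M Y (ev M A False \<inter> ev M C True) \<ge> 0"
  shows "RD_crude M A Y \<ge> RD_obs M A D Y \<and> RD_obs M A D Y \<ge> RD_true M A C Y"
proof -
  interpret prob_space M by fact
  have measure_C: "measure M (ev M C y) = 1/2" for y
    using pc measure_ev_False[OF assms(3)] by (cases y) auto
  have cprob_False: "cprob M (ev M X False) (ev M C y) = 1 - cprob M (ev M X True) (ev M C y)"
    if "X \<in> measurable M (count_space UNIV)" for X y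
    using cprob_ev_False[OF that ev_in_sets[OF assms(3)]] measure_C by simp
  define q where "q = cprob M (ev M A True) (ev M C True)"
  interpret symmetric_confounder_model M A C D Y q
  proof
    show "cprob M (ev M A x) (ev M C y) = (if x = y then q else 1 - q)" for x y
      using cprob_False[OF assms(2)] eq1 unfolding q_def by (cases x; cases y) simp_all
    show "cprob M (ev M D z) (ev M C y) = (if z = y then q else 1 - q)" for z y
      using cprob_False[OF assms(4)] eq1 eq2 eq3 unfolding q_def by (cases z; cases y) simp_all
  qed (fact assms(2-4,6) factor pos measure_C)+
  show ?thesis
    using risk_differences_ordered[of q] ge h1
    unfolding RD_crude_eq RD_obs_eq RD_true_eq q_def[symmetric] by simp
qed

end
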